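(* Let $\Omega\subset V_0$ be open, let $f\colon\Omega\to\mathbb{R}$ be continuous and suppose $\Gamma_f$ is a ruled surface. Let $R_1,R_2$ be distinct rulings of $\Gamma_f$, and for $i=1,2$ let $I_i\subset\mathbb{R}$ and $g_{R_i}\colon I_i\to\mathbb{R}$ be such that $\Pi(R_i)=\{(x,0,g_{R_i}(x)):x\in I_i\}$. Then either $g_{R_1}(x)\le g_{R_2}(x)$ for all $x\in I_1\cap I_2$, or $g_{R_1}(x)\ge g_{R_2}(x)$ for all $x\in I_1\cap I_2$.
   Context: $\mathbb{H}$ is $\mathbb{R}^3$ with product $(x,y,z)\cdot(x',y',z')=(x+x',y+y',z+z'+\frac{xy'-yx'}{2})$; $Y^t=(0,t,0)$. A horizontal line is a set $\{p\cdot tv:t\in\mathbb{R}\}$, $v=(a,b,0)\neq0$; a ruled surface is a union of horizontal line segments (rulings) with endpoints in its boundary. $V_0=\{(x,0,z)\}$; for $f\colon\Omega\to\mathbb{R}$, $\Gamma_f=\{u\cdot Y^{f(u)}:u\in\Omega\}$. The intrinsic projection is $\Pi(x,y,z)=(x,0,z-\frac{xy}{2})$ (the projection of a horizontal segment not parallel to $Y$ is the graph of a quadratic function of $x$). *)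

theory Defs
  imports "HOL-Analysis.Analysis"
begin

type_synonym heis = "real \<times> real \<times> real"

definition hmul :: "heis \<Rightarrow> heis \<Rightarrow> heis" where
  "hmul p q = (case p of (x, y, z) \<Rightarrow> case q of (x', y', z') \<Rightarrow>
      (x + x', y + y', z + z' + (x * y' - y * x') / 2))"

definition Yt :: "real \<Rightarrow> heis" where
  "Yt t = (0, t, 0)"

definition V0 :: "heis set" where
  "V0 = {(x, y, z). y = 0}"

definition intrinsic_graph :: "heis set \<Rightarrow> (heis \<Rightarrow> real) \<Rightarrow> heis set" where
  "intrinsic_graph \<Omega> f = {hmul u (Yt (f u)) | u. u \<in> \<Omega>}"

definition intr_proj :: "heis \<Rightarrow> heis" where
  "intr_proj p = (case p of (x, y, z) \<Rightarrow> (x, 0, z - x * y / 2))"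

definition horizontal_segment :: "heis \<Rightarrow> real \<times> real \<Rightarrow> real set \<Rightarrow> heis set" where
  "horizontal_segment p v J = (\<lambda>t. hmul p (t * fst v, t * snd v, 0)) ` J"

definition is_ruling :: "heis set \<Rightarrow> heis set \<Rightarrow> bool" where
  "is_ruling S R \<longleftrightarrow> (\<exists>p v J. v \<noteq> (0, 0) \<and> open J \<and> is_interval J \<and> J \<noteq> {} \<and>
      R = horizontal_segment p v J \<and> R \<subseteq> S \<and>
      (\<forall>c \<in> closure J - J. hmul p (c * fst v, c * snd v, 0) \<in> closure S - S))"

definition ruled_surface :: "heis set \<Rightarrow> bool" where
  "ruled_surface S \<longleftrightarrow> S = \<Union>{R. is_ruling S R}"

end

theory Submission
  imports Defs
begin

(* A horizontal line through q with direction (a, b), a \<noteq> 0, projects to the graph of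
   the quadratic x \<mapsto> h - y_q (x - x_q) - (b/a) (x - x_q)^2/2, where h is the height of
   \<Pi>(q) and y_q the y-coordinate of q.  If the projections of two rulings of an
   intrinsic graph cross at some c, the points of the rulings above c project to the
   same point, hence coincide because \<Pi> is injective on an intrinsic graph.  So the two
   quadratics share value and slope at c, and their difference is a multiple of
   (x - c)^2, which has constant sign.  A sign change would force such a crossing by the
   intermediate value theorem on the interval I1 \<inter> I2. *)

lemma is_interval_continuous_on_root:
  fixes h :: "real \<Rightarrow> real"
  assumes "is_interval I" and "continuous_on I h"
    and "a \<in> I" "b \<in> I" "h a \<ge> 0" "h b \<le> 0"
  obtains c where "c \<in> I" "h c = 0"
proof -
  have "is_interval (h ` I)"
    using assms(1,2) is_interval_connected is_interval_connected_1 connected_continuous_image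
    by blast
  then have "0 \<in> h ` I"
    by (rule mem_is_interval_1_I [where a = "h b" and c = "h a"]) (use assms in auto)
  then show thesis
    by (auto intro: that)
qed

lemma intr_proj_hmul_Yt:
  assumes "u \<in> V0"
  shows "intr_proj (hmul u (Yt c)) = u"
  using assms by (cases u) (auto simp: V0_def hmul_def Yt_def intr_proj_def)

lemma inj_on_intr_proj_intrinsic_graph:
  assumes "\<Omega> \<subseteq> V0"
  shows "inj_on intr_proj (intrinsic_graph \<Omega> f)"
proof (rule inj_onI)
  fix q q' assume "q \<in> intrinsic_graph \<Omega> f" "q' \<in> intrinsic_graph \<Omega> f"
    and "intr_proj q = intr_proj q'"
  then obtain u u' where "u \<in> \<Omega>" "q = hmul u (Yt (f u))" "u' \<in> \<Omega>" "q' = hmul u' (Yt (f u'))"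
    unfolding intrinsic_graph_def by blast
  with \<open>intr_proj q = intr_proj q'\<close> show "q = q'"
    using assms by (metis intr_proj_hmul_Yt subsetD)
qed

lemma hmul_horizontal_add:
  "hmul (hmul p (t * a, t * b, 0)) (s * a, s * b, 0) = hmul p ((t + s) * a, (t + s) * b, 0)"
  by (cases p) (simp add: hmul_def field_simps)

lemma intr_proj_hmul_horizontal:
  "intr_proj (hmul (x, y, z) (s * a, s * b, 0)) =
     (x + s * a, 0, z - x * y / 2 - s * a * y - s\<^sup>2 * a * b / 2)"
  by (simp add: hmul_def intr_proj_def field_simps power2_eq_square)

lemma horizontal_segment_proj_interval:
  assumes proj: "intr_proj ` horizontal_segment p v J = {(x, 0, g x) | x. x \<in> I}"
    and "is_interval J"
  shows "is_interval I"
proof -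
  obtain x y z where p: "p = (x, y, z)" by (cases p)
  have "I = fst ` intr_proj ` horizontal_segment p v J"
    unfolding proj by force
  also have "\<dots> = (\<lambda>t. x + t * fst v) ` J"
    by (force simp: horizontal_segment_def p intr_proj_hmul_horizontal)
  finally have "I = (\<lambda>t. x + t * fst v) ` J" .
  moreover have "connected ((\<lambda>t. x + t * fst v) ` J)"
    using \<open>is_interval J\<close>
    by (intro connected_continuous_image is_interval_connected continuous_intros)
  ultimately show ?thesis
    by (simp add: is_interval_connected_1)
qed

(* No hypothesis fst v \<noteq> 0 is needed: for a vertical segment I has at most one
   point, and then x' - x = 0 makes the (junk) quotient snd v / 0 = 0 irrelevant. *)

lemma horizontal_segment_proj_quadratic:
  assumes proj: "intr_proj ` horizontal_segment p v J = {(x, 0, g x) | x. x \<in> I}"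
    and "x \<in> I"
  obtains q where "q \<in> horizontal_segment p v J" "intr_proj q = (x, 0, g x)"
    and "\<And>x'. x' \<in> I \<Longrightarrow>
           g x' = g x - fst (snd q) * (x' - x) - snd v / fst v * (x' - x)\<^sup>2 / 2"
proof -
  obtain a b where v: "v = (a, b)" by (cases v)
  have point_above: "\<exists>t \<in> J. intr_proj (hmul p (t * a, t * b, 0)) = (x', 0, g x')"
    if "x' \<in> I" for x'
  proof -
    have "(x', 0, g x') \<in> intr_proj ` horizontal_segment p v J"
      unfolding proj using that by blast
    then show ?thesis by (auto simp: horizontal_segment_def v)
  qed
  obtain t where "t \<in> J" and qx: "intr_proj (hmul p (t * a, t * b, 0)) = (x, 0, g x)"
    using point_above \<open>x \<in> I\<close> by blast
  define q where "q = hmul p (t * a, t * b, 0)"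
  obtain xq yq zq where "q = (xq, yq, zq)" by (cases q)
  with qx have q: "q = (x, yq, zq)" and gx: "g x = zq - x * yq / 2"
    by (auto simp: q_def [symmetric] intr_proj_def)
  have "g x' = g x - yq * (x' - x) - b / a * (x' - x)\<^sup>2 / 2" if "x' \<in> I" for x'
  proof -
    obtain t' where "intr_proj (hmul p (t' * a, t' * b, 0)) = (x', 0, g x')"
      using point_above \<open>x' \<in> I\<close> by blast
    then have "intr_proj (hmul q ((t' - t) * a, (t' - t) * b, 0)) = (x', 0, g x')"
      by (simp add: q_def hmul_horizontal_add)
    then have "x' - x = (t' - t) * a"
      and "g x' = g x - (t' - t) * a * yq - (t' - t)\<^sup>2 * a * b / 2"
      by (auto simp: q intr_proj_hmul_horizontal gx)
    then show ?thesis
      by (cases "a = 0") (simp_all add: power2_eq_square)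
  qed
  moreover have "q \<in> horizontal_segment p v J"
    using \<open>t \<in> J\<close> by (auto simp: horizontal_segment_def v q_def)
  ultimately show thesis
    using that qx by (simp add: q_def [symmetric] q v)
qed

lemma horizontal_segment_proj_continuous:
  assumes "intr_proj ` horizontal_segment p v J = {(x, 0, g x) | x. x \<in> I}"
  shows "continuous_on I g"
proof (cases "I = {}")
  case False
  then obtain x where "x \<in> I" by blast
  then obtain q where "q \<in> horizontal_segment p v J" "intr_proj q = (x, 0, g x)"
    and quadratic: "\<And>x'. x' \<in> I \<Longrightarrow>
      g x' = g x - fst (snd q) * (x' - x) - snd v / fst v * (x' - x)\<^sup>2 / 2"
    by (rule horizontal_segment_proj_quadratic [OF assms]) (rule that)
  have "continuous_on I
      (\<lambda>x'. g x - fst (snd q) * (x' - x) - snd v / fst v * (x' - x)\<^sup>2 / 2)"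
    by (intro continuous_on_diff continuous_on_mult continuous_on_const continuous_on_id
        continuous_on_divide continuous_on_power) simp_all
  then show ?thesis
    by (rule continuous_on_eq) (metis quadratic)
qed simp

lemma rulings_proj_diff_square:
  assumes "\<Omega> \<subseteq> V0"
    and "is_ruling (intrinsic_graph \<Omega> f) R1" and "is_ruling (intrinsic_graph \<Omega> f) R2"
    and proj1: "intr_proj ` R1 = {(x, 0, g1 x) | x. x \<in> I1}"
    and proj2: "intr_proj ` R2 = {(x, 0, g2 x) | x. x \<in> I2}"
    and "c \<in> I1 \<inter> I2" and "g1 c = g2 c"
  obtains K where "\<And>x. x \<in> I1 \<inter> I2 \<Longrightarrow> g1 x - g2 x = K * (x - c)\<^sup>2"
proof -
  obtain p1 v1 J1 where R1: "R1 = horizontal_segment p1 v1 J1" "R1 \<subseteq> intrinsic_graph \<Omega> f"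
    using assms(2) unfolding is_ruling_def by blast
  obtain p2 v2 J2 where R2: "R2 = horizontal_segment p2 v2 J2" "R2 \<subseteq> intrinsic_graph \<Omega> f"
    using assms(3) unfolding is_ruling_def by blast
  from \<open>c \<in> I1 \<inter> I2\<close> have "c \<in> I1" "c \<in> I2" by simp_all
  obtain q1 where "q1 \<in> horizontal_segment p1 v1 J1" "intr_proj q1 = (c, 0, g1 c)"
    and g1: "\<And>x. x \<in> I1 \<Longrightarrow>
      g1 x = g1 c - fst (snd q1) * (x - c) - snd v1 / fst v1 * (x - c)\<^sup>2 / 2"
    using \<open>c \<in> I1\<close>
    by (rule horizontal_segment_proj_quadratic [OF proj1 [unfolded R1(1)]]) (rule that)
  obtain q2 where "q2 \<in> horizontal_segment p2 v2 J2" "intr_proj q2 = (c, 0, g2 c)"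
    and g2: "\<And>x. x \<in> I2 \<Longrightarrow>
      g2 x = g2 c - fst (snd q2) * (x - c) - snd v2 / fst v2 * (x - c)\<^sup>2 / 2"
    using \<open>c \<in> I2\<close>
    by (rule horizontal_segment_proj_quadratic [OF proj2 [unfolded R2(1)]]) (rule that)
  have "q1 = q2"
    using inj_on_intr_proj_intrinsic_graph [OF \<open>\<Omega> \<subseteq> V0\<close>] R1 R2
      \<open>q1 \<in> horizontal_segment p1 v1 J1\<close> \<open>q2 \<in> horizontal_segment p2 v2 J2\<close>
      \<open>intr_proj q1 = (c, 0, g1 c)\<close> \<open>intr_proj q2 = (c, 0, g2 c)\<close> \<open>g1 c = g2 c\<close>
    by (metis inj_onD subsetD)
  show thesis
  proof (rule that [of "(snd v2 / fst v2 - snd v1 / fst v1) / 2"])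
    fix x assume "x \<in> I1 \<inter> I2"
    then have "g1 x - g2 x = (g1 c - g2 c) - (fst (snd q1) - fst (snd q2)) * (x - c)
        + (snd v2 / fst v2 - snd v1 / fst v1) / 2 * (x - c)\<^sup>2"
      using g1 [of x] g2 [of x] by (simp add: algebra_simps diff_divide_distrib)
    then show "g1 x - g2 x = (snd v2 / fst v2 - snd v1 / fst v1) / 2 * (x - c)\<^sup>2"
      using \<open>q1 = q2\<close> \<open>g1 c = g2 c\<close> by simp
  qed
qed

theorem lemma2p1:
  fixes \<Omega> :: "heis set" and f :: "heis \<Rightarrow> real"
    and R1 R2 :: "heis set" and I1 I2 :: "real set" and g1 g2 :: "real \<Rightarrow> real"
  assumes "\<Omega> \<subseteq> V0" and "openin (top_of_set V0) \<Omega>"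
    and "continuous_on \<Omega> f"
    and "ruled_surface (intrinsic_graph \<Omega> f)"
    and "is_ruling (intrinsic_graph \<Omega> f) R1" and "is_ruling (intrinsic_graph \<Omega> f) R2"
    and "R1 \<noteq> R2"
    and "intr_proj ` R1 = {(x, 0, g1 x) | x. x \<in> I1}"
    and "intr_proj ` R2 = {(x, 0, g2 x) | x. x \<in> I2}"
  shows "(\<forall>x \<in> I1 \<inter> I2. g1 x \<le> g2 x) \<or> (\<forall>x \<in> I1 \<inter> I2. g1 x \<ge> g2 x)"
proof (rule ccontr)
  let ?I = "I1 \<inter> I2" and ?D = "\<lambda>x. g1 x - g2 x"
  assume "\<not> ?thesis"
  then obtain a b where ab: "a \<in> ?I" "b \<in> ?I" "?D a > 0" "?D b < 0"
    by (auto simp: not_le)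
  obtain p1 v1 J1 where "is_interval J1" and R1: "R1 = horizontal_segment p1 v1 J1"
    using assms(5) unfolding is_ruling_def by blast
  obtain p2 v2 J2 where "is_interval J2" and R2: "R2 = horizontal_segment p2 v2 J2"
    using assms(6) unfolding is_ruling_def by blast
  have "is_interval I1" "continuous_on I1 g1" "is_interval I2" "continuous_on I2 g2"
    using horizontal_segment_proj_interval horizontal_segment_proj_continuous assms(8,9)
      \<open>is_interval J1\<close> \<open>is_interval J2\<close>
    unfolding R1 R2 by blast+
  then have "is_interval ?I" "continuous_on ?I ?D"
    by (auto intro: is_interval_Int continuous_on_diff elim: continuous_on_subset)
  then obtain c where "c \<in> ?I" "g1 c = g2 c"
    by (rule is_interval_continuous_on_root [OF _ _ ab(1,2)]) (use ab in auto)
  then obtain K where "\<And>x. x \<in> ?I \<Longrightarrow> ?D x = K * (x - c)\<^sup>2"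
    by (rule rulings_proj_diff_square [OF assms(1,5,6,8,9)]) (rule that)
  then have "K * (a - c)\<^sup>2 > 0" "K * (b - c)\<^sup>2 < 0"
    using ab by auto
  then show False
    by (simp add: zero_less_mult_iff mult_less_0_iff)
qed

end
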